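(* Let $X$, $Y$, $Z$ be random variables with values in $\mathcal{X}$, $\mathcal{Y}$, $\mathcal{Z}$ and joint distribution $P_{X,Y,Z}$. Then $$\mathrm{Weak\text{-}MI}(X;Y|Z)\le \mathrm{MI}(X;Y|Z).$$
   Context: $D_{\mathrm{KL}}$ denotes the Kullback–Leibler divergence. $\mathbb{E}_{P_Z}[P_{X|Z}P_{Y|Z}]$ denotes the mixture measure on $\mathcal{X}\times\mathcal{Y}$ given by $\int P_{X|Z=z}\otimes P_{Y|Z=z}\,dP_Z(z)$, where $P_{X|Z=z}$, $P_{Y|Z=z}$ are conditional distributions and $P_Z$ is the marginal of $Z$. The weak-conditional mutual information is $\mathrm{Weak\text{-}MI}(X;Y|Z):=D_{\mathrm{KL}}\big(P_{X,Y}\,\|\,\mathbb{E}_{P_Z}[P_{X|Z}P_{Y|Z}]\big)$, and the conditional mutual information is $\mathrm{MI}(X;Y|Z):=\mathbb{E}_{z\sim P_Z}\big[D_{\mathrm{KL}}(P_{X,Y|Z=z}\,\|\,P_{X|Z=z}P_{Y|Z=z})\big]$. *)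

theory Defs
  imports "HOL-Probability.Probability"
begin

definition KL_div :: "'a measure \<Rightarrow> 'a measure \<Rightarrow> ereal" where
  "KL_div P Q =
     (if sets P = sets Q \<and> absolutely_continuous Q P then
        enn2ereal (\<integral>\<^sup>+ x. ennreal (ln (enn2real (RN_deriv Q P x))) \<partial>P)
        - enn2ereal (\<integral>\<^sup>+ x. ennreal (- ln (enn2real (RN_deriv Q P x))) \<partial>P)
      else \<infinity>)"

definition law_Z :: "('x \<times> 'y \<times> 'z) measure \<Rightarrow> 'z measure \<Rightarrow> 'z measure" where
  "law_Z P MZ = distr P MZ (\<lambda>(x, y, z). z)"

definition law_XY :: "('x \<times> 'y \<times> 'z) measure \<Rightarrow> 'x measure \<Rightarrow> 'y measure \<Rightarrow> ('x \<times> 'y) measure" where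
  "law_XY P MX MY = distr P (MX \<Otimes>\<^sub>M MY) (\<lambda>(x, y, z). (x, y))"

text \<open>K is a regular conditional distribution of (X,Y) given Z under the joint law P.\<close>
definition is_cond_dist ::
  "('x \<times> 'y \<times> 'z) measure \<Rightarrow> 'x measure \<Rightarrow> 'y measure \<Rightarrow> 'z measure
     \<Rightarrow> ('z \<Rightarrow> ('x \<times> 'y) measure) \<Rightarrow> bool" where
  "is_cond_dist P MX MY MZ K \<longleftrightarrow>
     K \<in> MZ \<rightarrow>\<^sub>M subprob_algebra (MX \<Otimes>\<^sub>M MY) \<and>
     (\<forall>z \<in> space MZ. prob_space (K z)) \<and>
     (\<forall>A \<in> sets (MX \<Otimes>\<^sub>M MY). \<forall>C \<in> sets MZ.
        emeasure P {(x, y, z) \<in> space P. (x, y) \<in> A \<and> z \<in> C}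
          = (\<integral>\<^sup>+ z. indicator C z * emeasure (K z) A \<partial>law_Z P MZ))"

definition condX :: "'x measure \<Rightarrow> ('z \<Rightarrow> ('x \<times> 'y) measure) \<Rightarrow> 'z \<Rightarrow> 'x measure" where
  "condX MX K z = distr (K z) MX fst"

definition condY :: "'y measure \<Rightarrow> ('z \<Rightarrow> ('x \<times> 'y) measure) \<Rightarrow> 'z \<Rightarrow> 'y measure" where
  "condY MY K z = distr (K z) MY snd"

definition weak_MI ::
  "('x \<times> 'y \<times> 'z) measure \<Rightarrow> 'x measure \<Rightarrow> 'y measure \<Rightarrow> 'z measure
     \<Rightarrow> ('z \<Rightarrow> ('x \<times> 'y) measure) \<Rightarrow> ereal" where
  "weak_MI P MX MY MZ K =
     KL_div (law_XY P MX MY)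
            (law_Z P MZ \<bind> (\<lambda>z. condX MX K z \<Otimes>\<^sub>M condY MY K z))"

definition cond_MI ::
  "('x \<times> 'y \<times> 'z) measure \<Rightarrow> 'x measure \<Rightarrow> 'y measure \<Rightarrow> 'z measure
     \<Rightarrow> ('z \<Rightarrow> ('x \<times> 'y) measure) \<Rightarrow> ereal" where
  "cond_MI P MX MY MZ K =
     enn2ereal (\<integral>\<^sup>+ z. e2ennreal (KL_div (K z) (condX MX K z \<Otimes>\<^sub>M condY MY K z)) \<partial>law_Z P MZ)"

end

theory Submission
  imports Defs
begin

text \<open>
  The Kullback--Leibler divergence has the Donsker--Varadhan variational form
  KL(M || N) = sup_g (E_M g - ln E_N exp g) over bounded measurable g: the lower bound is
  Gibbs' inequality, and the supremum is approached by truncations of the log-density ln (dM/dN).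
  Integrate against P_Z: the first term is linear in the mixing, while by Jensen's inequality
  ln E exp g under the mixture is at least the P_Z-average of ln E exp g under the components.
  So the functional of two mixtures is at most the average functional of their components, and
  taking suprema bounds the divergence of the mixtures by the average divergence. Weak-MI is the
  divergence between the mixtures of the P_{XY|Z=z} and of the P_{X|Z=z} P_{Y|Z=z}, and MI is
  the average divergence between the components.
\<close>

lemma mult_minus_ln_le_one:
  fixes t :: real
  assumes "0 \<le> t"
  shows "t * max 0 (- ln t) \<le> 1"
proof (cases "0 < t \<and> t < 1")
  case True
  have "- ln t = ln (1 / t)" using True by (simp add: ln_div)
  also have "\<dots> \<le> 1 / t - 1" using True by (intro ln_le_minus_one) simp
  finally have "t * (- ln t) \<le> t * (1 / t - 1)" using True by (intro mult_left_mono) auto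
  also have "\<dots> \<le> 1" using True by (simp add: right_diff_distrib)
  finally show ?thesis using True by simp
next
  case False
  then show ?thesis using assms by auto
qed

lemma exp_clamp_ln_le:
  fixes t a :: real
  assumes "0 \<le> t"
  shows "exp (if 0 < t then max (- a) (min a (ln t)) else - a) \<le> t + exp (- a)"
proof (cases "0 < t")
  case True
  have "exp (min a (ln t)) \<le> t" using True by (metis exp_ln exp_le_cancel_iff min.cobounded2)
  moreover have "exp (max (- a) (min a (ln t))) = max (exp (- a)) (exp (min a (ln t)))"
    by (simp add: max_def)
  ultimately show ?thesis using True by (simp add: add_increasing2)
qed (use assms in simp)

lemma SUP_ennreal_min_nat:
  fixes t :: real
  assumes "0 \<le> t"
  shows "(SUP n::nat. ennreal (min (real n) t)) = ennreal t"
proof (rule antisym)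
  show "(SUP n::nat. ennreal (min (real n) t)) \<le> ennreal t"
    by (rule SUP_least) (auto intro!: ennreal_leI)
  obtain n :: nat where "t \<le> real n" using real_arch_simple by blast
  then show "ennreal t \<le> (SUP n::nat. ennreal (min (real n) t))"
    by (intro SUP_upper2[where i=n]) auto
qed

lemma exp_neg_nat_less:
  fixes d :: real
  assumes "0 < d"
  shows "\<exists>n::nat. exp (- real n) < d"
proof -
  obtain n :: nat where n: "1 / d < real n" using reals_Archimedean2 by blast
  have "exp (- real n) = 1 / exp (real n)" by (simp add: exp_minus field_simps)
  also have "\<dots> \<le> 1 / (1 + real n)"
    by (intro divide_left_mono exp_ge_add_one_self) auto
  also have "\<dots> < d" using n assms by (simp add: field_simps)
  finally show ?thesis by blast
qed

definition DV_functional :: "'a measure \<Rightarrow> 'a measure \<Rightarrow> ('a \<Rightarrow> real) \<Rightarrow> real" where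
  "DV_functional M N g = (\<integral>x. g x \<partial>M) - ln (\<integral>x. exp (g x) \<partial>N)"

locale KL_abs_cont = M: prob_space M + N: prob_space N for M N :: "'a measure" +
  assumes sets_eq: "sets M = sets N"
    and abs_cont: "absolutely_continuous N M"
begin

definition dens :: "'a \<Rightarrow> real" where
  "dens x = enn2real (RN_deriv N M x)"

lemma dens_nonneg: "0 \<le> dens x"
  by (simp add: dens_def)

lemma space_eq: "space M = space N"
  using sets_eq by (rule sets_eq_imp_space_eq)

lemma measurable_M_iff: "f \<in> M \<rightarrow>\<^sub>M L \<longleftrightarrow> f \<in> N \<rightarrow>\<^sub>M L"
  by (simp only: measurable_cong_sets[OF sets_eq refl])

lemma measurable_dens [measurable]: "dens \<in> borel_measurable N" "dens \<in> borel_measurable M"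
  unfolding dens_def measurable_M_iff by simp_all

lemma density_RN_deriv_eq: "density N (RN_deriv N M) = M"
  using N.density_RN_deriv[OF abs_cont] sets_eq by simp

lemma AE_RN_deriv_eq_dens: "AE x in N. RN_deriv N M x = ennreal (dens x)"
  using N.RN_deriv_finite[OF M.sigma_finite_measure abs_cont sets_eq]
  by eventually_elim (auto simp: dens_def less_top)

lemma nn_integral_M_eq:
  assumes [measurable]: "f \<in> borel_measurable N"
  shows "(\<integral>\<^sup>+x. f x \<partial>M) = (\<integral>\<^sup>+x. ennreal (dens x) * f x \<partial>N)"
proof -
  have "(\<integral>\<^sup>+x. f x \<partial>M) = (\<integral>\<^sup>+x. RN_deriv N M x * f x \<partial>N)"
    by (subst density_RN_deriv_eq[symmetric], subst nn_integral_density) auto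
  also have "\<dots> = (\<integral>\<^sup>+x. ennreal (dens x) * f x \<partial>N)"
    using AE_RN_deriv_eq_dens by (intro nn_integral_cong_AE) auto
  finally show ?thesis .
qed

lemma nn_integral_dens: "(\<integral>\<^sup>+x. ennreal (dens x) \<partial>N) = 1"
  using nn_integral_M_eq[of "\<lambda>_. 1"] M.emeasure_space_1 by simp

lemma AE_dens_pos: "AE x in M. 0 < dens x"
proof -
  have "AE x in N. RN_deriv N M x \<noteq> 0 \<longrightarrow> 0 < dens x"
    using AE_RN_deriv_eq_dens by eventually_elim (auto simp: dens_nonneg less_le)
  then have "AE x in density N (RN_deriv N M). 0 < dens x"
    by (subst AE_density) auto
  then show ?thesis unfolding density_RN_deriv_eq .
qed

text \<open>So the subtraction in KL_div never meets \<infinity> - \<infinity>.\<close>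

lemma nn_integral_minus_ln_dens_le_1: "(\<integral>\<^sup>+x. ennreal (- ln (dens x)) \<partial>M) \<le> 1"
proof -
  have "(\<integral>\<^sup>+x. ennreal (- ln (dens x)) \<partial>M) = (\<integral>\<^sup>+x. ennreal (dens x * max 0 (- ln (dens x))) \<partial>N)"
    by (subst nn_integral_M_eq) (auto simp: ennreal_mult' ennreal_max_0 dens_def)
  also have "\<dots> \<le> (\<integral>\<^sup>+x. 1 \<partial>N)"
    by (intro nn_integral_mono) (auto simp: dens_def intro!: mult_minus_ln_le_one)
  finally show ?thesis by (simp add: N.emeasure_space_1)
qed

lemma KL_div_eq:
  "KL_div M N =
    enn2ereal (\<integral>\<^sup>+x. ennreal (ln (dens x)) \<partial>M) - enn2ereal (\<integral>\<^sup>+x. ennreal (- ln (dens x)) \<partial>M)"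
  using sets_eq abs_cont by (simp add: KL_div_def dens_def)

lemma KL_div_cases:
  obtains "KL_div M N = \<infinity>"
  | "integrable M (\<lambda>x. ln (dens x))" "KL_div M N = ereal (\<integral>x. ln (dens x) \<partial>M)"
proof (cases "(\<integral>\<^sup>+x. ennreal (ln (dens x)) \<partial>M) = \<infinity>")
  case True
  then show ?thesis
    using that(1) nn_integral_minus_ln_dens_le_1 by (auto simp: KL_div_eq top_unique)
next
  case False
  then have int: "integrable M (\<lambda>x. ln (dens x))"
    using nn_integral_minus_ln_dens_le_1 by (auto simp: real_integrable_def top_unique)
  then obtain p q where "0 \<le> p" "0 \<le> q"
    "(\<integral>\<^sup>+x. ennreal (ln (dens x)) \<partial>M) = ennreal p"
    "(\<integral>\<^sup>+x. ennreal (- ln (dens x)) \<partial>M) = ennreal q"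
    "(\<integral>x. ln (dens x) \<partial>M) = p - q"
    by (rule integrableE)
  then show ?thesis
    using that(2)[OF int] by (simp add: KL_div_eq)
qed

lemma nn_integral_div_dens_le:
  assumes [measurable]: "f \<in> borel_measurable N"
  shows "(\<integral>\<^sup>+x. ennreal (f x / dens x) \<partial>M) \<le> (\<integral>\<^sup>+x. ennreal (f x) \<partial>N)"
proof -
  have "(\<integral>\<^sup>+x. ennreal (f x / dens x) \<partial>M) = (\<integral>\<^sup>+x. ennreal (dens x) * ennreal (f x / dens x) \<partial>N)"
    by (rule nn_integral_M_eq) simp
  also have "\<dots> \<le> (\<integral>\<^sup>+x. ennreal (f x) \<partial>N)"
    by (intro nn_integral_mono) (auto simp: ennreal_mult'[symmetric] dens_nonneg)
  finally show ?thesis .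
qed

lemma integral_le_integral_ln_dens:
  assumes [measurable]: "h \<in> borel_measurable N"
    and bounded: "\<And>x. x \<in> space N \<Longrightarrow> \<bar>h x\<bar> \<le> B"
    and normalized: "(\<integral>x. exp (h x) \<partial>N) = 1"
    and int_ln: "integrable M (\<lambda>x. ln (dens x))"
  shows "(\<integral>x. h x \<partial>M) \<le> (\<integral>x. ln (dens x) \<partial>M)"
proof -
  have [measurable]: "h \<in> borel_measurable M"
    unfolding measurable_M_iff by simp
  have "integrable N (\<lambda>x. exp (h x))"
    by (rule N.integrable_const_bound[where B="exp B"]) (auto dest!: bounded simp: abs_le_iff)
  then have "(\<integral>\<^sup>+x. ennreal (exp (h x) / dens x) \<partial>M) \<le> 1"
    using nn_integral_div_dens_le[of "\<lambda>x. exp (h x)"] normalized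
    by (simp add: nn_integral_eq_integral)
  then have int_ratio: "integrable M (\<lambda>x. exp (h x) / dens x)"
    and ratio_le: "(\<integral>x. exp (h x) / dens x \<partial>M) \<le> 1"
    using order.strict_trans1[OF _ ennreal_one_less_top]
    by (auto intro!: integrableI_nonneg simp: dens_nonneg integral_eq_nn_integral enn2real_leI)
  have int_h: "integrable M h"
    by (rule M.integrable_const_bound[where B=B]) (auto simp: bounded space_eq)
  have "(\<integral>x. h x \<partial>M) - (\<integral>x. ln (dens x) \<partial>M) = (\<integral>x. h x - ln (dens x) \<partial>M)"
    using int_h int_ln by simp
  also have "\<dots> \<le> (\<integral>x. exp (h x) / dens x - 1 \<partial>M)"
  proof (rule integral_mono_AE)
    show "AE x in M. h x - ln (dens x) \<le> exp (h x) / dens x - 1"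
      using AE_dens_pos
    proof eventually_elim
      case (elim x)
      then have "h x - ln (dens x) = ln (exp (h x) / dens x)" by (simp add: ln_div)
      also have "\<dots> \<le> exp (h x) / dens x - 1" using elim by (intro ln_le_minus_one) simp
      finally show ?case .
    qed
  qed (use int_h int_ln int_ratio in simp_all)
  also have "\<dots> \<le> 0"
    using int_ratio ratio_le by (simp add: M.prob_space)
  finally show ?thesis by simp
qed

lemma DV_functional_le_KL_div:
  assumes [measurable]: "g \<in> borel_measurable N"
    and bounded: "\<And>x. x \<in> space N \<Longrightarrow> \<bar>g x\<bar> \<le> B"
  shows "ereal (DV_functional M N g) \<le> KL_div M N"
proof (cases rule: KL_div_cases)
  case infinite: 1
  then show ?thesis by simp
next
  case finite: 2
  define Z where "Z = (\<integral>x. exp (g x) \<partial>N)"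
  have "integrable N (\<lambda>x. exp (g x))"
    by (rule N.integrable_const_bound[where B="exp B"]) (auto dest!: bounded simp: abs_le_iff)
  moreover have "0 < Z"
    unfolding Z_def using calculation by (intro N.expectation_greater) auto
  ultimately have "(\<integral>x. exp (g x - ln Z) \<partial>N) = 1"
    by (simp add: exp_diff Z_def)
  moreover have "\<bar>g x - ln Z\<bar> \<le> B + \<bar>ln Z\<bar>" if "x \<in> space N" for x
    using bounded[OF that] by linarith
  ultimately have "(\<integral>x. g x - ln Z \<partial>M) \<le> (\<integral>x. ln (dens x) \<partial>M)"
    using finite(1) by (intro integral_le_integral_ln_dens) auto
  moreover have "integrable M g"
    by (rule M.integrable_const_bound[where B=B]) (auto simp: bounded space_eq measurable_M_iff)
  ultimately show ?thesis
    using finite(2) by (simp add: DV_functional_def Z_def M.prob_space)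
qed

lemma integrable_dens: "integrable N dens"
  using nn_integral_dens by (intro integrableI_nonneg) (auto simp: dens_nonneg)

lemma integral_dens: "(\<integral>x. dens x \<partial>N) = 1"
  using nn_integral_dens by (simp add: integral_eq_nn_integral dens_nonneg)

lemma integrable_neg_part_ln_dens: "integrable M (\<lambda>x. max 0 (- ln (dens x)))"
  using order.strict_trans1[OF nn_integral_minus_ln_dens_le_1 ennreal_one_less_top]
  by (intro integrableI_nonneg) (auto simp: ennreal_max_0)

lemma KL_div_eq_minus_integral:
  "KL_div M N = enn2ereal (\<integral>\<^sup>+x. ennreal (ln (dens x)) \<partial>M) - ereal (\<integral>x. max 0 (- ln (dens x)) \<partial>M)"
proof -
  have "(\<integral>\<^sup>+x. ennreal (- ln (dens x)) \<partial>M) = (\<integral>\<^sup>+x. ennreal (max 0 (- ln (dens x))) \<partial>M)"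
    by (simp add: ennreal_max_0)
  also have "\<dots> = ennreal (\<integral>x. max 0 (- ln (dens x)) \<partial>M)"
    by (rule nn_integral_eq_integral[OF integrable_neg_part_ln_dens]) simp
  finally show ?thesis by (simp add: KL_div_eq)
qed

lemma integrable_truncated_ln_dens: "integrable M (\<lambda>x. min (real n) (max 0 (ln (dens x))))"
  by (rule M.integrable_const_bound[where B="real n"]) auto

lemma SUP_integral_truncated_ln_dens:
  "(SUP n. ennreal (\<integral>x. min (real n) (max 0 (ln (dens x))) \<partial>M)) = (\<integral>\<^sup>+x. ennreal (ln (dens x)) \<partial>M)"
proof -
  have "(SUP n. ennreal (\<integral>x. min (real n) (max 0 (ln (dens x))) \<partial>M))
      = (SUP n. \<integral>\<^sup>+x. ennreal (min (real n) (max 0 (ln (dens x)))) \<partial>M)"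
    by (intro SUP_cong refl nn_integral_eq_integral[symmetric] integrable_truncated_ln_dens) auto
  also have "\<dots> = (\<integral>\<^sup>+x. (SUP n. ennreal (min (real n) (max 0 (ln (dens x))))) \<partial>M)"
    by (rule nn_integral_monotone_convergence_SUP[symmetric])
       (auto simp: incseq_def le_fun_def intro!: ennreal_leI)
  also have "\<dots> = (\<integral>\<^sup>+x. ennreal (ln (dens x)) \<partial>M)"
    by (simp add: SUP_ennreal_min_nat ennreal_max_0)
  finally show ?thesis .
qed

text \<open>Bounded approximations of ln dens, the maximiser of DV_functional M N.\<close>

definition clamped_ln_dens :: "nat \<Rightarrow> 'a \<Rightarrow> real" where
  "clamped_ln_dens n x =
    (if 0 < dens x then max (- real n) (min (real n) (ln (dens x))) else - real n)"

lemma measurable_clamped_ln_dens [measurable]: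
  "clamped_ln_dens n \<in> borel_measurable N" "clamped_ln_dens n \<in> borel_measurable M"
  unfolding clamped_ln_dens_def measurable_M_iff by simp_all

lemma abs_clamped_ln_dens_le: "\<bar>clamped_ln_dens n x\<bar> \<le> real n"
  by (simp add: clamped_ln_dens_def abs_le_iff; linarith)

lemma ln_integral_exp_clamped_le: "ln (\<integral>x. exp (clamped_ln_dens n x) \<partial>N) \<le> exp (- real n)"
proof -
  have int: "integrable N (\<lambda>x. exp (clamped_ln_dens n x))"
    by (rule N.integrable_const_bound[where B="exp (real n)"])
       (use abs_clamped_ln_dens_le in \<open>auto simp: abs_le_iff\<close>)
  have pos: "0 < (\<integral>x. exp (clamped_ln_dens n x) \<partial>N)"
    using int by (intro N.expectation_greater) auto
  have "(\<integral>x. exp (clamped_ln_dens n x) \<partial>N) \<le> (\<integral>x. dens x + exp (- real n) \<partial>N)"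
    using int integrable_dens
    by (intro integral_mono)
       (simp_all add: clamped_ln_dens_def exp_clamp_ln_le dens_nonneg del: exp_le_cancel_iff)
  also have "\<dots> = 1 + exp (- real n)"
    using integrable_dens by (simp add: integral_dens N.prob_space)
  finally have "ln (\<integral>x. exp (clamped_ln_dens n x) \<partial>N) \<le> ln (1 + exp (- real n))"
    using pos by simp
  also have "\<dots> \<le> exp (- real n)"
    by (rule ln_add_one_self_le_self) simp
  finally show ?thesis .
qed

lemma integral_clamped_ln_dens_ge:
  "(\<integral>x. min (real n) (max 0 (ln (dens x))) \<partial>M) - (\<integral>x. max 0 (- ln (dens x)) \<partial>M)
    \<le> (\<integral>x. clamped_ln_dens n x \<partial>M)"
proof -
  note int_trunc = integrable_truncated_ln_dens[of n]
  have "(\<integral>x. min (real n) (max 0 (ln (dens x))) \<partial>M) - (\<integral>x. max 0 (- ln (dens x)) \<partial>M)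
      = (\<integral>x. min (real n) (max 0 (ln (dens x))) - max 0 (- ln (dens x)) \<partial>M)"
    using int_trunc integrable_neg_part_ln_dens by simp
  also have "\<dots> \<le> (\<integral>x. clamped_ln_dens n x \<partial>M)"
  proof (rule integral_mono_AE)
    show "AE x in M.
        min (real n) (max 0 (ln (dens x))) - max 0 (- ln (dens x)) \<le> clamped_ln_dens n x"
      using AE_dens_pos
    proof eventually_elim
      case (elim x)
      have "min (real n) (max 0 l) - max 0 (- l) \<le> max (- real n) (min (real n) l)" for l :: real
        by linarith
      then show ?case using elim by (simp only: clamped_ln_dens_def if_True)
    qed
    show "integrable M (clamped_ln_dens n)"
      by (rule M.integrable_const_bound[where B="real n"]) (auto simp: abs_clamped_ln_dens_le)
  qed (use int_trunc integrable_neg_part_ln_dens in simp)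
  finally show ?thesis .
qed

lemma exists_DV_functional_clamped_gt:
  assumes "ereal c < KL_div M N"
  shows "\<exists>n. c < DV_functional M N (clamped_ln_dens n)"
proof -
  define a where "a n = (\<integral>x. min (real n) (max 0 (ln (dens x))) \<partial>M)" for n
  define q where "q = (\<integral>x. max 0 (- ln (dens x)) \<partial>M)"
  have DV_ge: "a n - q - exp (- real n) \<le> DV_functional M N (clamped_ln_dens n)" for n
    using integral_clamped_ln_dens_ge[of n] ln_integral_exp_clamped_le[of n]
    unfolding DV_functional_def a_def q_def by linarith
  have a_mono: "a m \<le> a n" if "m \<le> n" for m n
    unfolding a_def using that
    by (intro integral_mono integrable_truncated_ln_dens) auto
  obtain n1 where n1: "c + q < a n1"
  proof (cases "c + q < 0")
    case True
    then show ?thesis using that[of 0] by (simp add: a_def)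
  next
    case False
    have "ereal (c + q) < enn2ereal (SUP n. ennreal (a n))"
      using assms by (simp add: KL_div_eq_minus_integral SUP_integral_truncated_ln_dens a_def q_def
          ereal_less_minus)
    then have "ennreal (c + q) < (SUP n. ennreal (a n))"
      using False by (simp add: less_ennreal.rep_eq)
    then obtain n where "ennreal (c + q) < ennreal (a n)"
      by (auto simp: less_SUP_iff)
    then show ?thesis using False that by (simp add: ennreal_less_iff)
  qed
  obtain n2 where n2: "exp (- real n2) < a n1 - (c + q)"
    using exp_neg_nat_less[of "a n1 - (c + q)"] n1 by auto
  have "a n1 \<le> a (max n1 n2)" "exp (- real (max n1 n2)) \<le> exp (- real n2)"
    by (simp_all add: a_mono)
  then show ?thesis
    using DV_ge[of "max n1 n2"] n1 n2 by (intro exI[of _ "max n1 n2"]) linarith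
qed

end


lemma DV_functional_le_KL_div:
  assumes M: "prob_space M" and N: "prob_space N"
    and sets_M: "sets M = sets L" and sets_N: "sets N = sets L"
    and g: "g \<in> borel_measurable L" and bounded: "\<And>x. x \<in> space L \<Longrightarrow> \<bar>g x\<bar> \<le> B"
  shows "ereal (DV_functional M N g) \<le> KL_div M N"
proof (cases "absolutely_continuous N M")
  case True
  interpret KL_abs_cont M N
    using M N sets_M sets_N True by (simp add: KL_abs_cont_def KL_abs_cont_axioms_def)
  show ?thesis
    using g bounded
    by (intro DV_functional_le_KL_div[where B=B])
       (simp_all only: measurable_cong_sets[OF sets_N refl] sets_eq_imp_space_eq[OF sets_N])
qed (simp add: KL_div_def)

lemma DV_functional_indicator_null_set:
  assumes "prob_space M" "prob_space N" "sets M = sets N" "A \<in> null_sets N"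
  shows "DV_functional M N (\<lambda>x. t * indicator A x) = t * measure M A"
proof -
  have "AE x in N. exp (t * indicator A x) = 1"
    using AE_not_in[OF assms(4)] by eventually_elim simp
  then have "(\<integral>x. exp (t * indicator A x) \<partial>N) = (\<integral>x. 1 \<partial>N)"
    using assms(4) by (intro integral_cong_AE) auto
  moreover have "A \<subseteq> space M"
    using assms by (auto dest: sets.sets_into_space)
  ultimately show ?thesis
    using assms by (simp add: DV_functional_def prob_space.prob_space Int_absorb2)
qed

lemma exists_bounded_DV_functional_gt:
  assumes M: "prob_space M" and N: "prob_space N"
    and sets_M: "sets M = sets L" and sets_N: "sets N = sets L"
    and less: "ereal c < KL_div M N"
  obtains g B where "g \<in> borel_measurable L" "\<And>x. x \<in> space L \<Longrightarrow> \<bar>g x\<bar> \<le> B"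
    "c < DV_functional M N g"
proof (cases "absolutely_continuous N M")
  case True
  interpret KL_abs_cont M N
    using M N sets_M sets_N True by (simp add: KL_abs_cont_def KL_abs_cont_axioms_def)
  obtain n where "c < DV_functional M N (clamped_ln_dens n)"
    using exists_DV_functional_clamped_gt[OF less] by blast
  moreover have "clamped_ln_dens n \<in> borel_measurable L"
    using measurable_clamped_ln_dens(1) by (simp only: measurable_cong_sets[OF sets_N refl])
  ultimately show ?thesis
    using abs_clamped_ln_dens_le by (intro that) auto
next
  case False
  then obtain A where A: "A \<in> null_sets N" "A \<notin> null_sets M"
    by (auto simp: absolutely_continuous_def)
  interpret M: prob_space M by (fact M)
  have "0 < measure M A"
    using A sets_M sets_N by (simp add: null_sets_def M.emeasure_eq_measure zero_less_measure_iff)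
  define t where "t = (\<bar>c\<bar> + 1) / measure M A"
  have "c < t * measure M A"
    using \<open>0 < measure M A\<close> by (simp add: t_def)
  moreover have "A \<in> sets L"
    using A(1) sets_N by auto
  ultimately show ?thesis
    using DV_functional_indicator_null_set[OF M N _ A(1), of t] sets_M sets_N
    by (intro that[of "\<lambda>x. t * indicator A x" "\<bar>t\<bar>"]) (auto simp: indicator_def)
qed

lemma (in prob_space) integral_between_bounds:
  fixes f :: "'a \<Rightarrow> real"
  assumes "f \<in> borel_measurable M" "\<And>x. x \<in> space M \<Longrightarrow> a \<le> f x \<and> f x \<le> b"
  shows "a \<le> (\<integral>x. f x \<partial>M) \<and> (\<integral>x. f x \<partial>M) \<le> b"
proof -
  have "integrable M f"
    using assms by (intro integrable_const_bound[where B="max \<bar>a\<bar> \<bar>b\<bar>"]) force+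
  then show ?thesis
    using assms by (auto intro!: integral_ge_const integral_le_const)
qed

lemma (in prob_space)
  fixes g :: "'a \<Rightarrow> real"
  assumes [measurable]: "g \<in> borel_measurable M" and bounded: "\<And>x. x \<in> space M \<Longrightarrow> \<bar>g x\<bar> \<le> B"
  shows abs_integral_le_bound: "\<bar>\<integral>x. g x \<partial>M\<bar> \<le> B"
    and integral_exp_between_bounds: "exp (- B) \<le> (\<integral>x. exp (g x) \<partial>M) \<and> (\<integral>x. exp (g x) \<partial>M) \<le> exp B"
proof -
  have "- B \<le> g x \<and> g x \<le> B" and exp_bounds: "exp (- B) \<le> exp (g x) \<and> exp (g x) \<le> exp B"
    if "x \<in> space M" for x
    using bounded[OF that] by (auto simp: abs_le_iff)
  then show "\<bar>\<integral>x. g x \<partial>M\<bar> \<le> B"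
    using integral_between_bounds[of g "- B" B] by (simp add: abs_le_iff)
  show "exp (- B) \<le> (\<integral>x. exp (g x) \<partial>M) \<and> (\<integral>x. exp (g x) \<partial>M) \<le> exp B"
    using exp_bounds by (intro integral_between_bounds) auto
qed

lemma (in prob_space) integral_ln_le_ln_integral:
  fixes f :: "'a \<Rightarrow> real"
  assumes "integrable M f" "integrable M (\<lambda>x. ln (f x))" "AE x in M. 0 < f x"
  shows "(\<integral>x. ln (f x) \<partial>M) \<le> ln (\<integral>x. f x \<partial>M)"
proof -
  have "- ln (\<integral>x. f x \<partial>M) \<le> (\<integral>x. - ln (f x) \<partial>M)"
    using assms ln_concave
    by (intro jensens_inequality[where q="\<lambda>x. - ln x" and I="{0<..}" and a=0])
       (auto simp: concave_on_def)
  then show ?thesis by simp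
qed

lemma DV_functional_bind_le:
  fixes K Q :: "'b \<Rightarrow> 'a measure"
  assumes \<mu>: "prob_space \<mu>"
    and K [measurable]: "K \<in> \<mu> \<rightarrow>\<^sub>M subprob_algebra L"
    and Q [measurable]: "Q \<in> \<mu> \<rightarrow>\<^sub>M subprob_algebra L"
    and prob_K: "\<And>z. z \<in> space \<mu> \<Longrightarrow> prob_space (K z)"
    and prob_Q: "\<And>z. z \<in> space \<mu> \<Longrightarrow> prob_space (Q z)"
    and g [measurable]: "g \<in> borel_measurable L" and bounded: "\<And>x. x \<in> space L \<Longrightarrow> \<bar>g x\<bar> \<le> B"
  shows "integrable \<mu> (\<lambda>z. DV_functional (K z) (Q z) g)"
    and "DV_functional (\<mu> \<bind> K) (\<mu> \<bind> Q) g \<le> (\<integral>z. DV_functional (K z) (Q z) g \<partial>\<mu>)"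
proof -
  interpret \<mu>: prob_space \<mu> by (fact \<mu>)
  define G where "G z = (\<integral>x. g x \<partial>K z)" for z
  define E where "E z = (\<integral>x. exp (g x) \<partial>Q z)" for z
  have [measurable]: "G \<in> borel_measurable \<mu>" "E \<in> borel_measurable \<mu>"
    unfolding G_def E_def by measurable
  have G_bound: "\<bar>G z\<bar> \<le> B" and E_bounds: "exp (- B) \<le> E z \<and> E z \<le> exp B"
    if z: "z \<in> space \<mu>" for z
  proof -
    have "g \<in> borel_measurable (K z)" "g \<in> borel_measurable (Q z)"
      using g by (simp_all only: subprob_measurableD(3)[OF K z] subprob_measurableD(3)[OF Q z])
    then show "\<bar>G z\<bar> \<le> B" "exp (- B) \<le> E z \<and> E z \<le> exp B"
      unfolding G_def E_def
      by (intro prob_space.abs_integral_le_bound[OF prob_K[OF z]]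
            prob_space.integral_exp_between_bounds[OF prob_Q[OF z]];
          simp add: bounded subprob_measurableD(1)[OF K z] subprob_measurableD(1)[OF Q z])+
  qed
  have E_pos: "0 < E z" and abs_E: "\<bar>E z\<bar> \<le> exp B" and abs_ln_E: "\<bar>ln (E z)\<bar> \<le> B"
    if "z \<in> space \<mu>" for z
  proof -
    show "0 < E z" using E_bounds[OF that] exp_gt_zero[of "- B"] by linarith
    then show "\<bar>E z\<bar> \<le> exp B" "\<bar>ln (E z)\<bar> \<le> B"
      using E_bounds[OF that] ln_le_cancel_iff[of "exp (- B)" "E z"]
        ln_le_cancel_iff[of "E z" "exp B"]
      by (auto simp: abs_le_iff)
  qed
  have int_G: "integrable \<mu> G"
    using G_bound by (intro \<mu>.integrable_const_bound[where B=B]) auto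
  have int_E: "integrable \<mu> E"
    using abs_E by (intro \<mu>.integrable_const_bound[where B="exp B"]) auto
  have int_ln_E: "integrable \<mu> (\<lambda>z. ln (E z))"
    using abs_ln_E by (intro \<mu>.integrable_const_bound[where B=B]) auto
  have DV_eq: "DV_functional (K z) (Q z) g = G z - ln (E z)" for z
    by (simp add: DV_functional_def G_def E_def)
  show "integrable \<mu> (\<lambda>z. DV_functional (K z) (Q z) g)"
    unfolding DV_eq using int_G int_ln_E by simp
  have "(\<integral>x. g x \<partial>(\<mu> \<bind> K)) = (\<integral>z. G z \<partial>\<mu>)"
    unfolding G_def using bounded prob_space.emeasure_space_1[OF prob_K]
    by (intro integral_bind[OF g _ K, where B'=1]) auto
  moreover have "(\<integral>x. exp (g x) \<partial>(\<mu> \<bind> Q)) = (\<integral>z. E z \<partial>\<mu>)"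
    unfolding E_def using bounded prob_space.emeasure_space_1[OF prob_Q]
    by (intro integral_bind[OF _ _ Q, where B'=1 and B="exp B"]) (auto simp: abs_le_iff)
  moreover have "(\<integral>z. ln (E z) \<partial>\<mu>) \<le> ln (\<integral>z. E z \<partial>\<mu>)"
    using int_E int_ln_E E_pos by (intro \<mu>.integral_ln_le_ln_integral AE_I2)
  moreover have "(\<integral>z. DV_functional (K z) (Q z) g \<partial>\<mu>) = (\<integral>z. G z \<partial>\<mu>) - (\<integral>z. ln (E z) \<partial>\<mu>)"
    unfolding DV_eq using int_G int_ln_E by simp
  ultimately show "DV_functional (\<mu> \<bind> K) (\<mu> \<bind> Q) g \<le> (\<integral>z. DV_functional (K z) (Q z) g \<partial>\<mu>)"
    by (simp add: DV_functional_def)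
qed

lemma integral_le_nn_integral_e2ennreal:
  assumes "integrable \<mu> f" "\<And>z. z \<in> space \<mu> \<Longrightarrow> ereal (f z) \<le> F z"
  shows "ereal (\<integral>z. f z \<partial>\<mu>) \<le> enn2ereal (\<integral>\<^sup>+z. e2ennreal (F z) \<partial>\<mu>)"
proof -
  have pos_part: "ennreal (\<integral>z. max 0 (f z) \<partial>\<mu>) = (\<integral>\<^sup>+z. ennreal (f z) \<partial>\<mu>)"
    using assms(1) by (subst nn_integral_eq_integral[symmetric]) (auto simp: ennreal_max_0)
  have "ereal (\<integral>z. f z \<partial>\<mu>) \<le> ereal (\<integral>z. max 0 (f z) \<partial>\<mu>)"
    using assms(1) by (simp add: integral_mono)
  also have "\<dots> = enn2ereal (\<integral>\<^sup>+z. ennreal (f z) \<partial>\<mu>)"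
    unfolding pos_part[symmetric] by simp
  also have "\<dots> \<le> enn2ereal (\<integral>\<^sup>+z. e2ennreal (F z) \<partial>\<mu>)"
    unfolding less_eq_ennreal.rep_eq[symmetric]
    using assms(2) by (intro nn_integral_mono) (metis e2ennreal_ereal e2ennreal_mono)
  finally show ?thesis .
qed

lemma KL_div_bind_le:
  fixes K Q :: "'b \<Rightarrow> 'a measure"
  assumes \<mu>: "prob_space \<mu>"
    and K [measurable]: "K \<in> \<mu> \<rightarrow>\<^sub>M subprob_algebra L"
    and Q [measurable]: "Q \<in> \<mu> \<rightarrow>\<^sub>M subprob_algebra L"
    and prob_K: "\<And>z. z \<in> space \<mu> \<Longrightarrow> prob_space (K z)"
    and prob_Q: "\<And>z. z \<in> space \<mu> \<Longrightarrow> prob_space (Q z)"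
  shows "KL_div (\<mu> \<bind> K) (\<mu> \<bind> Q) \<le> enn2ereal (\<integral>\<^sup>+z. e2ennreal (KL_div (K z) (Q z)) \<partial>\<mu>)"
proof (rule dense_le)
  interpret \<mu>: prob_space \<mu> by (fact \<mu>)
  fix y
  assume "y < KL_div (\<mu> \<bind> K) (\<mu> \<bind> Q)"
  then obtain c where "y < ereal c" and c: "ereal c < KL_div (\<mu> \<bind> K) (\<mu> \<bind> Q)"
    using ereal_dense2 by blast
  have "prob_space (\<mu> \<bind> K)" "prob_space (\<mu> \<bind> Q)"
    using prob_K prob_Q
    by (auto intro!: \<mu>.prob_space_bind[OF AE_I2 K] \<mu>.prob_space_bind[OF AE_I2 Q])
  moreover have "sets (\<mu> \<bind> K) = sets L" "sets (\<mu> \<bind> Q) = sets L"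
    using sets_bind_measurable[OF K \<mu>.not_empty] sets_bind_measurable[OF Q \<mu>.not_empty] .
  ultimately obtain g B where g: "g \<in> borel_measurable L"
    and bounded: "\<And>x. x \<in> space L \<Longrightarrow> \<bar>g x\<bar> \<le> B"
    and "c < DV_functional (\<mu> \<bind> K) (\<mu> \<bind> Q) g"
    using c by (rule exists_bounded_DV_functional_gt) (rule that)
  note DV_bind = DV_functional_bind_le[OF \<mu> K Q prob_K prob_Q g bounded]
  have "ereal c \<le> ereal (\<integral>z. DV_functional (K z) (Q z) g \<partial>\<mu>)"
    using \<open>c < DV_functional (\<mu> \<bind> K) (\<mu> \<bind> Q) g\<close> DV_bind(2) by simp
  also have "\<dots> \<le> enn2ereal (\<integral>\<^sup>+z. e2ennreal (KL_div (K z) (Q z)) \<partial>\<mu>)"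
    using prob_K prob_Q subprob_measurableD(2)[OF K] subprob_measurableD(2)[OF Q] g bounded
    by (intro integral_le_nn_integral_e2ennreal[OF DV_bind(1)] DV_functional_le_KL_div)
  finally show "y \<le> enn2ereal (\<integral>\<^sup>+z. e2ennreal (KL_div (K z) (Q z)) \<partial>\<mu>)"
    using \<open>y < ereal c\<close> by simp
qed

lemma measurable_cond_product:
  assumes "K \<in> MZ \<rightarrow>\<^sub>M subprob_algebra (MX \<Otimes>\<^sub>M MY)"
  shows "(\<lambda>z. condX MX K z \<Otimes>\<^sub>M condY MY K z) \<in> MZ \<rightarrow>\<^sub>M subprob_algebra (MX \<Otimes>\<^sub>M MY)"
  unfolding condX_def condY_def
  by (rule measurable_pair_measure
      [OF measurable_compose[OF assms measurable_distr[OF measurable_fst]]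
        measurable_compose[OF assms measurable_distr[OF measurable_snd]]])

lemma prob_space_cond_product:
  assumes "prob_space (K z)" "sets (K z) = sets (MX \<Otimes>\<^sub>M MY)"
  shows "prob_space (condX MX K z \<Otimes>\<^sub>M condY MY K z)"
proof -
  interpret prob_space "K z" by (fact assms(1))
  have "fst \<in> K z \<rightarrow>\<^sub>M MX" "snd \<in> K z \<rightarrow>\<^sub>M MY"
    by (simp_all only: measurable_cong_sets[OF assms(2) refl] measurable_fst measurable_snd)
  then show ?thesis
    unfolding condX_def condY_def by (intro prob_space_pair prob_space_distr)
qed

lemma
  assumes "prob_space P" "sets P = sets (MX \<Otimes>\<^sub>M (MY \<Otimes>\<^sub>M MZ))"
  shows prob_space_law_Z: "prob_space (law_Z P MZ)"
    and sets_law_Z: "sets (law_Z P MZ) = sets MZ"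
proof -
  have "(\<lambda>(x, y, z). z) \<in> P \<rightarrow>\<^sub>M MZ"
    by (simp only: measurable_cong_sets[OF assms(2) refl]) measurable
  then show "prob_space (law_Z P MZ)"
    unfolding law_Z_def by (rule prob_space.prob_space_distr[OF assms(1)])
qed (simp add: law_Z_def)

lemma law_XY_eq_bind_cond_dist:
  assumes "prob_space P" and sets_P: "sets P = sets (MX \<Otimes>\<^sub>M (MY \<Otimes>\<^sub>M MZ))"
    and cond: "is_cond_dist P MX MY MZ K"
  shows "law_XY P MX MY = law_Z P MZ \<bind> K"
proof (rule measure_eqI)
  have K: "K \<in> law_Z P MZ \<rightarrow>\<^sub>M subprob_algebra (MX \<Otimes>\<^sub>M MY)"
    using cond sets_law_Z[OF assms(1,2)] by (simp add: is_cond_dist_def cong: measurable_cong_sets)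
  have nonempty: "space (law_Z P MZ) \<noteq> {}"
    using prob_space.not_empty[OF prob_space_law_Z[OF assms(1,2)]] .
  show "sets (law_XY P MX MY) = sets (law_Z P MZ \<bind> K)"
    by (simp add: law_XY_def sets_bind_measurable[OF K nonempty])
  fix A
  assume "A \<in> sets (law_XY P MX MY)"
  then have A: "A \<in> sets (MX \<Otimes>\<^sub>M MY)"
    by (simp add: law_XY_def)
  have space_P: "space P = space MX \<times> space MY \<times> space MZ"
    using sets_eq_imp_space_eq[OF sets_P] by (simp add: space_pair_measure)
  have "(\<lambda>(x, y, z). (x, y)) \<in> P \<rightarrow>\<^sub>M MX \<Otimes>\<^sub>M MY"
    by (simp only: measurable_cong_sets[OF sets_P refl]) measurable
  then have "emeasure (law_XY P MX MY) A = emeasure P ((\<lambda>(x, y, z). (x, y)) -` A \<inter> space P)"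
    unfolding law_XY_def using A by (rule emeasure_distr)
  also have "(\<lambda>(x, y, z). (x, y)) -` A \<inter> space P = {(x, y, z) \<in> space P. (x, y) \<in> A \<and> z \<in> space MZ}"
    using space_P by auto
  also have "emeasure P \<dots> = (\<integral>\<^sup>+z. indicator (space MZ) z * emeasure (K z) A \<partial>law_Z P MZ)"
    using cond A by (simp add: is_cond_dist_def)
  also have "\<dots> = (\<integral>\<^sup>+z. emeasure (K z) A \<partial>law_Z P MZ)"
    by (intro nn_integral_cong) (simp add: law_Z_def)
  also have "\<dots> = emeasure (law_Z P MZ \<bind> K) A"
    by (rule emeasure_bind[symmetric, OF nonempty K A])
  finally show "emeasure (law_XY P MX MY) A = emeasure (law_Z P MZ \<bind> K) A" .
qed

theorem propositionA6:
  fixes P :: "('x \<times> 'y \<times> 'z) measure"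
    and MX :: "'x measure" and MY :: "'y measure" and MZ :: "'z measure"
    and K :: "'z \<Rightarrow> ('x \<times> 'y) measure"
  assumes "prob_space P"
    and "sets P = sets (MX \<Otimes>\<^sub>M (MY \<Otimes>\<^sub>M MZ))"
    and "is_cond_dist P MX MY MZ K"
  shows "weak_MI P MX MY MZ K \<le> cond_MI P MX MY MZ K"
proof -
  have K: "K \<in> MZ \<rightarrow>\<^sub>M subprob_algebra (MX \<Otimes>\<^sub>M MY)"
    and prob_K: "\<And>z. z \<in> space MZ \<Longrightarrow> prob_space (K z)"
    using assms(3) by (simp_all add: is_cond_dist_def)
  note sets_Z = sets_law_Z[OF assms(1,2)]
  show ?thesis
    unfolding weak_MI_def cond_MI_def law_XY_eq_bind_cond_dist[OF assms]
  proof (rule KL_div_bind_le[OF prob_space_law_Z[OF assms(1,2)]])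
    show "K \<in> law_Z P MZ \<rightarrow>\<^sub>M subprob_algebra (MX \<Otimes>\<^sub>M MY)"
      "(\<lambda>z. condX MX K z \<Otimes>\<^sub>M condY MY K z) \<in> law_Z P MZ \<rightarrow>\<^sub>M subprob_algebra (MX \<Otimes>\<^sub>M MY)"
      using K measurable_cond_product[OF K] by (simp_all only: measurable_cong_sets[OF sets_Z refl])
    show "prob_space (K z)" "prob_space (condX MX K z \<Otimes>\<^sub>M condY MY K z)"
      if "z \<in> space (law_Z P MZ)" for z
      using that prob_K subprob_measurableD(2)[OF K] sets_eq_imp_space_eq[OF sets_Z]
      by (simp_all add: prob_space_cond_product)
  qed
qed

end
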